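(* For $j \geq 0$, define $s_{2j} = (gf)^j$ and $s_{2j+1} = f(gf)^j$. Let $m_i$ denote the $i$-th row in the matrix $M$. Then $m_i = s_i(m_0)$.
   Context: Let $X_2=\{0,1\}$. Define matrices $M_n$ of size $2^n \times n$ with entries in $X_2$ recursively by \[ M_1 = \begin{bmatrix} 0 \\ 1 \end{bmatrix}, \qquad M_{n+1} = \begin{bmatrix} M_n & 0_n \\ M_n^R & 1_n \end{bmatrix}, \] where $M_n^R$ is obtained from $M_n$ by reversing the order of its rows, and $0_n$, $1_n$ are column vectors with $2^n$ entries all equal to $0$, $1$ respectively (the rows of $M_n$ form the binary reflected Gray code of length $n$). Let $M=\lim_{n\to\infty}M_n$ be the infinite limit matrix, with rows indexed from $0$ and regarded as infinite binary words ending in $0^\infty$ (so $m_0=0^\infty$). The binary tree automorphisms $f$ and $g$ are defined recursively by $f(0w)=1w$, $f(1w)=0w$, and $g(0w)=0\,g(w)$, $g(1w)=1\,f(w)$ (and both fix the empty word). Composition is from right to left. *)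

theory Defs
  imports Main
begin

(* Binary alphabet X_2 = {0,1} encoded as bool: 0 = False, 1 = True.
   Finite words (tree vertices) are bool lists; infinite words are nat => bool. *)

(* M_n as the list of its 2^n rows, each row a list of length n. *)
fun Mmat :: "nat \<Rightarrow> bool list list" where
  "Mmat 0 = [[]]"
| "Mmat (Suc 0) = [[False], [True]]"
| "Mmat (Suc (Suc n)) =
     map (\<lambda>r. r @ [False]) (Mmat (Suc n)) @ map (\<lambda>r. r @ [True]) (rev (Mmat (Suc n)))"

(* Row i of the limit matrix M, as an infinite binary word: entry k is taken from
   M_{k+1+i}, which has more than i rows and more than k columns (rows stabilise). *)
definition mrow :: "nat \<Rightarrow> nat \<Rightarrow> bool" where
  "mrow i k = Mmat (Suc k + i) ! i ! k"

fun fa :: "bool list \<Rightarrow> bool list" where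
  "fa [] = []"
| "fa (False # w) = True # w"
| "fa (True # w) = False # w"

fun ga :: "bool list \<Rightarrow> bool list" where
  "ga [] = []"
| "ga (False # w) = False # ga w"
| "ga (True # w) = True # fa w"

(* Extension of a (length/prefix preserving) tree automorphism to infinite words. *)
definition act :: "(bool list \<Rightarrow> bool list) \<Rightarrow> (nat \<Rightarrow> bool) \<Rightarrow> nat \<Rightarrow> bool" where
  "act h w k = h (map w [0..<Suc k]) ! k"

definition s :: "nat \<Rightarrow> bool list \<Rightarrow> bool list" where
  "s i = (if even i then (ga \<circ> fa) ^^ (i div 2) else fa \<circ> (ga \<circ> fa) ^^ (i div 2))"

end

theory Submission
  imports Defs
begin

text \<open>Row \<open>i\<close> of \<open>M\<close> is the reflected Gray code of \<open>i\<close>, i.e. the little-endian binary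
  expansion of \<open>i XOR \<lfloor>i/2\<rfloor>\<close>. Passing from \<open>i\<close> to \<open>i + 1\<close> changes this word in a single
  letter: the first one if \<open>i\<close> is even, which is what \<open>f\<close> does, and the one after the first
  letter \<open>1\<close> if \<open>i\<close> is odd, which is what \<open>g\<close> does. Hence the alternating products \<open>s\<^sub>i\<close>
  enumerate the Gray codes starting from \<open>m\<^sub>0 = 0\<^sup>\<infinity>\<close>.\<close>

unbundle bit_operations_syntax

definition gray_code :: "nat \<Rightarrow> nat" where
  "gray_code i = i XOR i div 2"

definition gray_word :: "nat \<Rightarrow> nat \<Rightarrow> bool list" where
  "gray_word n i = map (bit (gray_code i)) [0..<n]"

lemma bit_gray_code: "bit (gray_code i) k \<longleftrightarrow> bit i k \<noteq> bit i (Suc k)"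
  by (simp add: gray_code_def bit_xor_iff bit_Suc)

lemma gray_code_half: "gray_code i div 2 = gray_code (i div 2)"
  by (rule bit_eqI) (simp add: bit_gray_code flip: bit_Suc)

lemma gray_word_0 [simp]: "gray_word 0 i = []"
  by (simp add: gray_word_def)

lemma gray_word_Suc: "gray_word (Suc n) i = (odd i \<noteq> odd (i div 2)) # gray_word n (i div 2)"
  unfolding gray_word_def
  by (simp add: map_upt_Suc bit_Suc gray_code_half del: upt_Suc)
     (use bit_gray_code[of i 0] in \<open>simp add: bit_0 bit_Suc\<close>)

lemma gray_word_snoc: "gray_word (Suc n) i = gray_word n i @ [bit (gray_code i) n]"
  by (simp add: gray_word_def)

lemma gray_word_zero: "gray_word n 0 = replicate n False"
  by (simp add: gray_word_def gray_code_def map_replicate_const bot_fun_def)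

lemma fa_gray_word_even: "even i \<Longrightarrow> fa (gray_word n i) = gray_word n (Suc i)"
proof (cases n)
  case Suc
  assume "even i"
  then have "Suc i div 2 = i div 2" by presburger
  with \<open>even i\<close> Suc show ?thesis
    by (cases "odd (i div 2)") (simp_all add: gray_word_Suc)
qed simp

lemma ga_gray_word_odd: "odd i \<Longrightarrow> ga (gray_word n i) = gray_word n (Suc i)"
proof (induction n arbitrary: i)
  case (Suc n)
  have half_Suc: "Suc i div 2 = Suc (i div 2)" using Suc.prems by presburger
  show ?case
  proof (cases "even (i div 2)")
    case True
    then have "odd i \<noteq> odd (i div 2)" "odd (Suc i) \<noteq> odd (Suc i div 2)"
      using Suc.prems half_Suc by auto
    with True show ?thesis
      using fa_gray_word_even[of "i div 2" n] half_Suc by (simp add: gray_word_Suc)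
  next
    case False
    then have "odd i = odd (i div 2)" "odd (Suc i) = odd (Suc i div 2)"
      using Suc.prems half_Suc by auto
    with False show ?thesis
      using Suc.IH[of "i div 2"] half_Suc by (simp add: gray_word_Suc)
  qed
qed simp

lemma s_Suc: "s (Suc i) = (if even i then fa \<circ> s i else ga \<circ> s i)"
proof (cases "even i")
  case True
  then have "Suc i div 2 = i div 2" by presburger
  with True show ?thesis by (simp add: s_def)
next
  case False
  then have "Suc i div 2 = Suc (i div 2)" by presburger
  with False show ?thesis by (simp add: s_def o_assoc)
qed

lemma s_replicate_False: "s i (replicate n False) = gray_word n i"
  by (induction i) (simp_all add: s_Suc fa_gray_word_even ga_gray_word_odd, simp add: s_def gray_word_zero)

text \<open>Complementing the lowest \<open>n + 1\<close> bits of \<open>i\<close> leaves their adjacent differences unchanged;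
  this is the reflection in the recursive construction of \<open>M\<close>.\<close>

lemma gray_word_reflect: "i + j + 1 = 2 ^ Suc n \<Longrightarrow> gray_word n i = gray_word n j"
proof (induction n arbitrary: i j)
  case (Suc n)
  have parity: "odd j \<longleftrightarrow> even i" using Suc.prems by (simp; presburger)
  have halves: "i div 2 + j div 2 + 1 = 2 ^ Suc n" using Suc.prems parity by (simp; presburger)
  then have "odd (j div 2) \<longleftrightarrow> even (i div 2)" by (simp; presburger)
  with Suc.IH[OF halves] parity show ?case by (simp add: gray_word_Suc)
qed simp

lemma Mmat_Suc:
  "Mmat (Suc n) = map (\<lambda>r. r @ [False]) (Mmat n) @ map (\<lambda>r. r @ [True]) (rev (Mmat n))"
  by (cases n) auto

lemma length_Mmat: "length (Mmat n) = 2 ^ n"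
  by (induction n) (auto simp: Mmat_Suc)

lemma Mmat_nth: "i < 2 ^ n \<Longrightarrow> Mmat n ! i = gray_word n i"
proof (induction n arbitrary: i)
  case (Suc n)
  show ?case
  proof (cases "i < 2 ^ n")
    case True
    then have "\<not> bit (gray_code i) n"
      unfolding bit_gray_code by (simp add: bit_iff_odd)
    with True Suc.IH show ?thesis
      by (simp add: Mmat_Suc nth_append length_Mmat gray_word_snoc)
  next
    case False
    define j where "j = 2 ^ Suc n - 1 - i"
    have "j < 2 ^ n" "i + j + 1 = 2 ^ Suc n" "i - 2 ^ n < 2 ^ n"
      using False Suc.prems by (simp_all add: j_def)
    have "i div 2 ^ n = 1"
      using False Suc.prems by (simp add: div_nat_eqI)
    then have "bit i n \<and> \<not> bit i (Suc n)"
      using Suc.prems by (simp add: bit_iff_odd del: power_Suc)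
    then have "bit (gray_code i) n"
      by (simp add: bit_gray_code)
    moreover have "rev (Mmat n) ! (i - 2 ^ n) = Mmat n ! j"
      using False Suc.prems by (simp add: rev_nth length_Mmat j_def mult_2)
    ultimately show ?thesis
      using False \<open>j < 2 ^ n\<close> \<open>i - 2 ^ n < 2 ^ n\<close> Suc.IH gray_word_reflect[OF \<open>i + j + 1 = _\<close>]
      by (simp add: Mmat_Suc nth_append length_Mmat gray_word_snoc)
  qed
qed simp

lemma mrow_eq_bit_gray_code: "mrow i = bit (gray_code i)"
proof
  fix k
  have "i < 2 ^ (Suc k + i)"
    using less_exp[of i] by (meson le_add2 order_less_le_trans power_increasing one_le_numeral)
  then show "mrow i k = bit (gray_code i) k"
    by (simp add: mrow_def Mmat_nth gray_word_def del: upt_Suc)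
qed

theorem mainTheorem10:
  shows "\<forall>i. mrow i = act (s i) (mrow 0)"
proof
  fix i
  have "map (mrow 0) [0..<Suc k] = replicate (Suc k) False" for k
    by (simp add: mrow_eq_bit_gray_code gray_code_def map_replicate_const bot_fun_def del: upt_Suc)
  then have "act (s i) (mrow 0) k = gray_word (Suc k) i ! k" for k
    by (simp add: act_def s_replicate_False del: upt_Suc replicate_Suc)
  then show "mrow i = act (s i) (mrow 0)"
    by (simp add: mrow_eq_bit_gray_code gray_word_def fun_eq_iff del: upt_Suc)
qed

end
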